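(* Let $\beta\in(0,d]$, $c_\beta=1+2^\beta$, and let $Q_0\subset\mathbb{R}^d$ be a cube. There exist constants $c,C>0$ such that $$\mathcal{H}^{\beta,Q}_\infty\left(\{x\in Q:|u(x)-c_Q|>t\}\right) \leq \frac{C}{\|u\|_{BMO^\beta_*(Q_0)}} \int_{Q} |u-c_Q|\, d\mathcal{H}^{\beta,Q}_\infty \exp\left(\frac{-ct}{\|u\|_{BMO^\beta_*(Q_0)}}\right)$$ for all $u \in BMO^\beta(Q_0)$ with $\|u\|_{BMO^\beta_*(Q_0)}>0$, all finite subcubes $Q \subset Q_0$ with sides parallel to those of $Q_0$, and all $t\geq c_\beta \|u\|_{BMO^\beta_*(Q_0)}$, where $c_Q\in\mathbb{R}$ is a point at which $c\mapsto \frac{1}{l(Q)^\beta} \int_{Q} |u-c| \,d\mathcal{H}^{\beta,Q}_\infty$ attains its minimum.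
   Context: $\mathcal{H}^{\beta}_{\infty}(E)= \inf \{\sum_{i} \omega_\beta r_i^\beta : E \subset \bigcup_{i} B(x_i,r_i) \}$, $\omega_\beta= \pi^{\beta/2}/\Gamma(\beta/2+1)$. For a cube $Q=a+[0,\ell)^d$ (cubes are half-open), $\mathcal{D}(Q)=\{a+2^{-j}\ell(m+[0,1)^d): j\in\mathbb{Z}, m\in\mathbb{Z}^d\}$ and $\mathcal{H}^{\beta,Q}_{\infty}(E)= \inf \{\sum_{i} l(Q_i)^\beta : E \subset \bigcup_{i} Q_i,\ Q_i \in \mathcal{D}(Q) \}$, $l(\cdot)$ the side length. For an outer measure $H$, $f\ge0$ and a set $A$, $\int_A f\,dH=\int_0^\infty H(\{x\in A:f(x)>t\})\,dt$. $f$ is $\mathcal{H}^\beta_\infty$-quasicontinuous if for every $\epsilon>0$ there is an open $O$ with $\mathcal{H}^\beta_\infty(O)<\epsilon$ and $f|_{O^c}$ continuous; $L^1(Q_0;\mathcal{H}^\beta_\infty)$ is the set of such $f$ with $\int_{Q_0}|f|\,d\mathcal{H}^\beta_\infty<\infty$. $BMO^\beta(Q_0)$ is the set of $u\in L^1(Q_0;\mathcal{H}^\beta_\infty)$ with $\sup_{Q}\inf_{c\in\mathbb{R}} l(Q)^{-\beta}\int_Q|u-c|\,d\mathcal{H}^\beta_\infty<\infty$, and $\|u\|_{BMO^{\beta}_*(Q_0)}= \sup_{Q} \inf_{c \in \mathbb{R}} l(Q)^{-\beta} \int_{Q} |u-c| \,d\mathcal{H}^{\beta,Q}_\infty$, both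 suprema over finite subcubes $Q\subset Q_0$ with sides parallel to those of $Q_0$. *)

theory Defs
  imports "HOL-Analysis.Analysis"
begin

definition cube :: "real^'d \<Rightarrow> real \<Rightarrow> (real^'d) set" where
  "cube a l = {x. \<forall>i. a$i \<le> x$i \<and> x$i < a$i + l}"

definition omega :: "real \<Rightarrow> real" where
  "omega \<beta> = pi powr (\<beta>/2) / Gamma (\<beta>/2 + 1)"

definition hcont :: "real \<Rightarrow> (real^'d) set \<Rightarrow> ennreal" where
  "hcont \<beta> E = Inf {(\<Sum>i. ennreal (omega \<beta> * r i powr \<beta>)) | (x :: nat \<Rightarrow> real^'d) (r :: nat \<Rightarrow> real).
      (\<forall>i. 0 \<le> r i) \<and> E \<subseteq> (\<Union>i. ball (x i) (r i))}"

text \<open>Dyadic cubes D(Q) of Q = cube a l, as (corner, side length) pairs: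
  corner a + 2^(-j) l m, side 2^(-j) l, with j integer and m in Z^d.\<close>
definition dyadic_params :: "real^'d \<Rightarrow> real \<Rightarrow> ((real^'d) \<times> real) set" where
  "dyadic_params a l = {(a + (2 powr (- real_of_int j) * l) *\<^sub>R m, 2 powr (- real_of_int j) * l)
      | j m. \<forall>i. m$i \<in> \<int>}"

text \<open>Dyadic Hausdorff content H^{beta,Q}_infinity for Q = cube a l.\<close>
definition hdy :: "real \<Rightarrow> real^'d \<Rightarrow> real \<Rightarrow> (real^'d) set \<Rightarrow> ennreal" where
  "hdy \<beta> a l E = Inf {(\<Sum>i. ennreal (s i powr \<beta>)) | (p :: nat \<Rightarrow> real^'d) (s :: nat \<Rightarrow> real).
      (\<forall>i. (p i, s i) \<in> dyadic_params a l) \<and> E \<subseteq> (\<Union>i. cube (p i) (s i))}"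

definition choq :: "('a set \<Rightarrow> ennreal) \<Rightarrow> 'a set \<Rightarrow> ('a \<Rightarrow> real) \<Rightarrow> ennreal" where
  "choq H A f = set_nn_integral lborel {0::real..} (\<lambda>t. H {x \<in> A. f x > t})"

definition quasicont :: "real \<Rightarrow> (real^'d) set \<Rightarrow> (real^'d \<Rightarrow> real) \<Rightarrow> bool" where
  "quasicont \<beta> Q0 f \<longleftrightarrow> (\<forall>\<epsilon>>0. \<exists>V. open V \<and> hcont \<beta> V < ennreal \<epsilon> \<and> continuous_on (Q0 - V) f)"

definition L1H :: "real \<Rightarrow> (real^'d) set \<Rightarrow> (real^'d \<Rightarrow> real) set" where
  "L1H \<beta> Q0 = {f. quasicont \<beta> Q0 f \<and> choq (hcont \<beta>) Q0 (\<lambda>x. \<bar>f x\<bar>) < \<infinity>}"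

text \<open>Finite subcubes cube a l of cube a0 l0 (sides automatically parallel).\<close>
definition subcube :: "real^'d \<Rightarrow> real \<Rightarrow> real^'d \<Rightarrow> real \<Rightarrow> bool" where
  "subcube a0 l0 a l \<longleftrightarrow> 0 < l \<and> cube a l \<subseteq> cube a0 l0"

definition BMO :: "real \<Rightarrow> real^'d \<Rightarrow> real \<Rightarrow> (real^'d \<Rightarrow> real) set" where
  "BMO \<beta> a0 l0 = {u. u \<in> L1H \<beta> (cube a0 l0) \<and>
     (SUP al \<in> {(a,l). subcube a0 l0 a l}.
        INF c. ennreal (snd al powr (-\<beta>)) * choq (hcont \<beta>) (cube (fst al) (snd al)) (\<lambda>x. \<bar>u x - c\<bar>)) < \<infinity>}"

definition bmo_star :: "real \<Rightarrow> real^'d \<Rightarrow> real \<Rightarrow> (real^'d \<Rightarrow> real) \<Rightarrow> ennreal" where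
  "bmo_star \<beta> a0 l0 u =
     (SUP al \<in> {(a,l). subcube a0 l0 a l}.
        INF c. ennreal (snd al powr (-\<beta>)) *
          choq (hdy \<beta> (fst al) (snd al)) (cube (fst al) (snd al)) (\<lambda>x. \<bar>u x - c\<bar>))"

end

theory Submission
  imports Defs
begin

text \<open>The proof is the John-Nirenberg iteration on the dyadic grid of \<open>Q\<close>, with the dyadic
  content \<open>H\<close> in place of Lebesgue measure. \<open>H\<close> is a countably subadditive outer measure
  that gives every dyadic cell exactly the content \<open>side\<^sup>\<beta>\<close> (the lower bound compares with
  Lebesgue measure and uses \<open>\<beta> \<le> d\<close>), and it is superadditive over the children of a cell
  on subsets of smaller content. Let \<open>B\<close> be twice the dyadic BMO norm. The set where \<open>u\<close>
  leaves a constant by more than \<open>4B\<close> has a Calderon-Zygmund decomposition: the maximal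
  cells in which it has more than half the content have total content at most twice its
  \<open>H\<close>, and the rest of it is \<open>H\<close>-null by a density argument. On each of these cells the
  optimal constant differs from the original one by at most \<open>gap = (16 + 12 2\<^sup>\<beta>) B\<close>, so
  raising the level by \<open>gap\<close> halves the bound on the content of the level set. Iterating
  gives the estimate with \<open>c = ln 2 / (32 + 24 2\<^sup>\<beta>)\<close> and \<open>C = 1\<close>.\<close>

lemma choq_mono:
  assumes "\<And>s. 0 \<le> s \<Longrightarrow> H1 {x\<in>A. s < f x} \<le> H2 {x\<in>B. s < g x}"
  shows "choq H1 A f \<le> choq H2 B g"
  unfolding choq_def
  by (intro nn_integral_mono) (auto simp: assms indicator_def intro: mult_right_mono)

lemma choq_markov:
  assumes mono: "\<And>X Y. X \<subseteq> Y \<Longrightarrow> H X \<le> H Y" and t: "0 < t"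
  shows "ennreal t * H {x\<in>A. t < f x} \<le> choq H A f"
proof -
  have "(\<integral>\<^sup>+s. H {x\<in>A. t < f x} * indicator {0..<t} s \<partial>lborel) \<le> choq H A f"
    unfolding choq_def
  proof (intro nn_integral_mono)
    fix s :: real
    show "H {x\<in>A. t < f x} * indicator {0..<t} s \<le> H {x\<in>A. s < f x} * indicator {0..} s"
    proof (cases "s \<in> {0..<t}")
      case True
      then have "{x\<in>A. t < f x} \<subseteq> {x\<in>A. s < f x}" by auto
      then show ?thesis using True mono by (auto simp: indicator_def)
    qed (simp add: indicator_def)
  qed
  also have "(\<integral>\<^sup>+s. H {x\<in>A. t < f x} * indicator {0..<t} s \<partial>lborel) = H {x\<in>A. t < f x} * ennreal t"
    using t by (subst nn_integral_cmult_indicator) auto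
  finally show ?thesis by (simp add: mult.commute)
qed

lemma ennreal_le_divide_of_mult_le:
  assumes "0 < c" "ennreal c * X \<le> Y"
  shows "X \<le> ennreal (1/c) * Y"
proof -
  have "X = ennreal (1/c) * (ennreal c * X)"
    using assms(1) by (simp add: mult.assoc[symmetric] ennreal_mult[symmetric])
  also have "\<dots> \<le> ennreal (1/c) * Y" using assms(2) by (rule mult_left_mono) simp
  finally show ?thesis .
qed

lemma ennreal_le_suminf: "(f :: nat \<Rightarrow> ennreal) i \<le> suminf f"
  using sum_le_suminf[of f "{i}"] by simp

lemma suminf_ennreal_halves: "0 \<le> e \<Longrightarrow> (\<Sum>i. ennreal (e * (1/2)^Suc i)) = ennreal e"
  using sums_mult[OF power_half_series, of e] by (subst suminf_ennreal2) (auto simp: sums_iff)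

lemma emeasure_lborel_cbox_cube:
  fixes p :: "real^'d" assumes "0 \<le> s"
  shows "emeasure lborel (cbox p (p + (\<chi> i. s))) = ennreal (s ^ CARD('d))"
    and "emeasure lborel (box p (p + (\<chi> i. s))) = ennreal (s ^ CARD('d))"
proof -
  have inner: "(\<chi> i. s) \<bullet> b = s" if "b \<in> Basis" for b :: "real^'d"
    using that by (auto simp: Basis_vec_def inner_axis)
  have "(\<Prod>b\<in>Basis. (p + (\<chi> i. s) - p) \<bullet> b) = (\<Prod>b\<in>(Basis::(real^'d) set). s)"
    by (rule prod.cong) (auto simp: inner)
  then have prod: "(\<Prod>b\<in>Basis. (p + (\<chi> i. s) - p) \<bullet> b) = s ^ CARD('d)"
    by simp
  have le: "\<forall>b\<in>Basis. p \<bullet> b \<le> (p + (\<chi> i. s)) \<bullet> b"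
    using inner assms by (simp add: inner_add_left)
  show "emeasure lborel (cbox p (p + (\<chi> i. s))) = ennreal (s ^ CARD('d))"
    using le prod by (simp add: emeasure_lborel_cbox_eq)
  show "emeasure lborel (box p (p + (\<chi> i. s))) = ennreal (s ^ CARD('d))"
    using le prod by (simp add: emeasure_lborel_box_eq)
qed

lemma box_subset_cube: "box p (p + (\<chi> i. s)) \<subseteq> cube p s"
  by (auto simp: cube_def mem_box_cart intro: less_imp_le)

lemma cube_subset_cbox: "cube p s \<subseteq> cbox p (p + (\<chi> i. s))"
  by (auto simp: cube_def mem_box_cart) (meson less_imp_le)

lemma cube_volume_le_cover_sum:
  fixes p :: "real^'d" and q :: "nat \<Rightarrow> real^'d"
  assumes s: "0 \<le> s" and r: "\<And>i. 0 \<le> r i" and cover: "cube p s \<subseteq> (\<Union>i. cube (q i) (r i))"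
  shows "ennreal (s ^ CARD('d)) \<le> (\<Sum>i. ennreal (r i ^ CARD('d)))"
proof -
  have "(\<Union>i. cube (q i) (r i)) \<subseteq> (\<Union>i. cbox (q i) (q i + (\<chi> j. r i)))"
    by (rule UN_mono) (simp_all add: cube_subset_cbox)
  with cover have "cube p s \<subseteq> (\<Union>i. cbox (q i) (q i + (\<chi> j. r i)))"
    by (rule order_trans)
  then have "box p (p + (\<chi> i. s)) \<subseteq> (\<Union>i. cbox (q i) (q i + (\<chi> j. r i)))"
    using box_subset_cube by (rule order_trans[rotated])
  then have "emeasure lborel (box p (p + (\<chi> i. s))) \<le> emeasure lborel (\<Union>i. cbox (q i) (q i + (\<chi> j. r i)))"
    by (rule emeasure_mono) auto
  also have "\<dots> \<le> (\<Sum>i. emeasure lborel (cbox (q i) (q i + (\<chi> j. r i))))"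
    by (rule emeasure_subadditive_countably) auto
  finally show ?thesis
    using s r by (simp add: emeasure_lborel_cbox_cube)
qed

lemma cube_powr_le_cover_sum:
  fixes p :: "real^'d" and q :: "nat \<Rightarrow> real^'d"
  assumes \<beta>: "0 < \<beta>" "\<beta> \<le> real CARD('d)" and s: "0 < s" and r: "\<And>i. 0 < r i"
    and cover: "cube p s \<subseteq> (\<Union>i. cube (q i) (r i))"
  shows "ennreal (s powr \<beta>) \<le> (\<Sum>i. ennreal (r i powr \<beta>))"
proof (cases "\<exists>i. s \<le> r i")
  case True
  then obtain i where "s \<le> r i" by blast
  then have "ennreal (s powr \<beta>) \<le> ennreal (r i powr \<beta>)"
    using s \<beta> by (intro ennreal_leI powr_mono2) auto
  also have "\<dots> \<le> (\<Sum>i. ennreal (r i powr \<beta>))"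
    by (rule ennreal_le_suminf)
  finally show ?thesis .
next
  case False
  define d where "d = real CARD('d)"
  have volume: "ennreal (s powr d) \<le> (\<Sum>i. ennreal (r i powr d))"
    using cube_volume_le_cover_sum[OF less_imp_le[OF s] less_imp_le[OF r] cover] s r
    by (simp add: d_def powr_realpow)
  have summand_le: "s powr (\<beta> - d) * r i powr d \<le> r i powr \<beta>" for i
  proof -
    have "s powr (\<beta> - d) \<le> r i powr (\<beta> - d)"
      using False \<beta> r[of i] by (intro powr_mono2') (auto simp: d_def not_le less_imp_le)
    then have "s powr (\<beta> - d) * r i powr d \<le> r i powr (\<beta> - d) * r i powr d"
      by (simp add: mult_right_mono)
    also have "\<dots> = r i powr \<beta>" by (simp add: powr_add[symmetric])
    finally show ?thesis .
  qed
  have "ennreal (s powr \<beta>) = ennreal (s powr (\<beta> - d)) * ennreal (s powr d)"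
    using s by (simp add: ennreal_mult[symmetric] powr_add[symmetric])
  also have "\<dots> \<le> ennreal (s powr (\<beta> - d)) * (\<Sum>i. ennreal (r i powr d))"
    by (rule mult_left_mono[OF volume]) simp
  also have "\<dots> = (\<Sum>i. ennreal (s powr (\<beta> - d) * r i powr d))"
    by (simp add: ennreal_mult)
  also have "\<dots> \<le> (\<Sum>i. ennreal (r i powr \<beta>))"
    by (intro suminf_le ennreal_leI summand_le) auto
  finally show ?thesis .
qed

lemma half_power_nat_floor_le: "(1/2 :: real) ^ nat \<lfloor>x\<rfloor> \<le> 2 * 2 powr (- x)"
proof -
  have "x - 1 < real (nat \<lfloor>x\<rfloor>)"
    using floor_correct[of x] by linarith
  have "(1/2 :: real) ^ nat \<lfloor>x\<rfloor> = 2 powr (- real (nat \<lfloor>x\<rfloor>))"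
    by (simp add: powr_minus powr_realpow power_one_over inverse_eq_divide)
  also have "\<dots> \<le> 2 powr (1 - x)"
    using \<open>x - 1 < real (nat \<lfloor>x\<rfloor>)\<close> by (intro powr_mono) auto
  also have "\<dots> = 2 * 2 powr (- x)"
    by (simp add: powr_diff powr_minus divide_inverse)
  finally show ?thesis .
qed

section \<open>Dyadic cells\<close>

locale dyadic_grid =
  fixes \<beta> :: real and a :: "real^'d" and l :: real
  assumes beta_pos: "0 < \<beta>" and beta_le_dim: "\<beta> \<le> real CARD('d)" and side_length_pos: "0 < l"
begin

definition side :: "int \<Rightarrow> real" where
  "side k = 2 powr (- real_of_int k) * l"

definition cell_content :: "int \<Rightarrow> real" where
  "cell_content k = side k powr \<beta>"

definition index :: "int \<Rightarrow> real^'d \<Rightarrow> 'd \<Rightarrow> int" where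
  "index k x = (\<lambda>i. \<lfloor>(x$i - a$i) / side k\<rfloor>)"

definition corner :: "int \<Rightarrow> ('d \<Rightarrow> int) \<Rightarrow> real^'d" where
  "corner k m = a + side k *\<^sub>R (\<chi> i. real_of_int (m i))"

definition cell :: "int \<Rightarrow> ('d \<Rightarrow> int) \<Rightarrow> (real^'d) set" where
  "cell k m = cube (corner k m) (side k)"

abbreviation H :: "(real^'d) set \<Rightarrow> ennreal" where
  "H \<equiv> hdy \<beta> a l"

lemma side_pos: "0 < side k"
  using side_length_pos by (simp add: side_def)

lemma cell_content_pos: "0 < cell_content k"
  using side_pos[of k] by (simp add: cell_content_def)

lemma side_add: "side (k + j) = 2 powr (- real_of_int j) * side k"
  by (simp add: side_def powr_add[symmetric] algebra_simps)

lemma side_less_iff: "side k' < side k \<longleftrightarrow> k < k'"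
  using side_length_pos by (simp add: side_def)

lemma side_le_iff: "side k' \<le> side k \<longleftrightarrow> k \<le> k'"
  using side_length_pos by (simp add: side_def)

lemma side_parent: "side (k - 1) = 2 * side k"
  using side_add[of k "-1"] by simp

lemma one_le_two_powr_beta: "1 \<le> 2 powr \<beta>"
  using beta_pos ge_one_powr_ge_zero[of 2 \<beta>] by simp

lemma cell_content_parent: "cell_content (k - 1) = 2 powr \<beta> * cell_content k"
  by (simp add: cell_content_def side_parent powr_mult side_pos)

lemma cell_content_le_iff: "cell_content k' \<le> cell_content k \<longleftrightarrow> k \<le> k'"
proof -
  have "side k' powr \<beta> \<le> side k powr \<beta> \<longleftrightarrow> side k' \<le> side k"
    using beta_pos side_pos[of k] side_pos[of k']
    by (meson not_le powr_less_mono2 powr_mono2 less_imp_le)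
  then show ?thesis using side_le_iff[of k' k] by (simp add: cell_content_def)
qed

lemma cell_content_le_powr: "side k \<le> r \<Longrightarrow> cell_content k \<le> r powr \<beta>"
  using beta_pos side_pos[of k] by (simp add: cell_content_def powr_mono2)

lemma mem_cell_iff: "y \<in> cell k m \<longleftrightarrow> index k y = m"
proof -
  have "y \<in> cell k m \<longleftrightarrow> (\<forall>i. real_of_int (m i) \<le> (y$i - a$i) / side k
                                \<and> (y$i - a$i) / side k < real_of_int (m i) + 1)"
    using side_pos[of k]
    by (auto simp: cell_def cube_def corner_def pos_le_divide_eq pos_divide_less_eq algebra_simps)
  also have "\<dots> \<longleftrightarrow> index k y = m"
    by (auto simp: index_def fun_eq_iff floor_eq_iff)
  finally show ?thesis .
qed

lemma mem_cell_index: "x \<in> cell k (index k x)"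
  by (simp add: mem_cell_iff)

lemma corner_in_cell: "corner k m \<in> cell k m"
  using side_pos[of k] by (simp add: cell_def cube_def)

lemma index_corner: "index k (corner k m) = m"
  using corner_in_cell mem_cell_iff by blast

lemma index_coarser:
  assumes "k \<le> k'"
  shows "index k y i = index k' y i div 2 ^ nat (k' - k)"
proof -
  have "side k' = 2 powr (- real_of_int (k' - k)) * side k"
    using side_add[of k "k' - k"] by simp
  then have side_k: "side k = 2 powr real_of_int (k' - k) * side k'"
    by (simp add: powr_minus field_simps powr_add[symmetric])
  have pow: "2 powr real_of_int (k' - k) = real_of_int (2 ^ nat (k' - k))"
    using assms by (simp add: powr_realpow[symmetric])
  have "(y$i - a$i) / side k = ((y$i - a$i) / side k') / real_of_int (2 ^ nat (k' - k))"
    unfolding side_k pow by simp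
  then have "index k y i = \<lfloor>((y$i - a$i) / side k') / real_of_int (2 ^ nat (k' - k))\<rfloor>"
    unfolding index_def by (rule arg_cong)
  also have "\<dots> = index k' y i div 2 ^ nat (k' - k)"
    unfolding index_def by (rule floor_divide_real_eq_div) simp
  finally show ?thesis .
qed

lemma index_parent: "index k y i = index (k + 1) y i div 2"
  using index_coarser[of k "k + 1" y i] by simp

lemma index_eq_coarser: "k \<le> k' \<Longrightarrow> index k' y = index k' x \<Longrightarrow> index k y = index k x"
  using index_coarser[of k k'] by (auto simp: fun_eq_iff)

lemma index_coarser_corner: "j \<le> k \<Longrightarrow> index j (corner k (index k x)) = index j x"
  using index_eq_coarser[of j k "corner k (index k x)" x] index_corner by simp

lemma cell_nested: "k \<le> k' \<Longrightarrow> y \<in> cell k m \<Longrightarrow> y \<in> cell k' m' \<Longrightarrow> cell k' m' \<subseteq> cell k m"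
  by (auto simp: mem_cell_iff dest: index_eq_coarser[of k k'])

lemma dyadic_params_cell:
  assumes "(p, r) \<in> dyadic_params a l"
  obtains k m where "p = corner k m" "r = side k"
proof -
  from assms obtain j v where p: "p = a + (2 powr (- real_of_int j) * l) *\<^sub>R v"
    and r: "r = 2 powr (- real_of_int j) * l" and v: "\<forall>i. v$i \<in> \<int>"
    by (auto simp: dyadic_params_def)
  have "v = (\<chi> i. real_of_int \<lfloor>v$i\<rfloor>)"
    using v by (auto simp: vec_eq_iff elim!: Ints_cases)
  then have "p = corner j (\<lambda>i. \<lfloor>v$i\<rfloor>)" "r = side j"
    using p r by (simp_all add: corner_def side_def)
  then show ?thesis by (rule that)
qed

lemma cell_in_dyadic_params: "(corner k m, side k) \<in> dyadic_params a l"
  unfolding dyadic_params_def corner_def side_def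
  by (rule CollectI, rule exI[of _ k], rule exI[of _ "\<chi> i. real_of_int (m i)"]) auto

lemma cube_eq_cell: "cube a l = cell 0 (\<lambda>_. 0)"
  by (simp add: cell_def corner_def side_def zero_vec_def[symmetric])

definition children :: "('d \<Rightarrow> int) \<Rightarrow> ('d \<Rightarrow> int) set" where
  "children m = {m'. \<forall>i. m' i div 2 = m i}"

lemma finite_children: "finite (children m)"
proof (rule finite_subset)
  show "children m \<subseteq> Pi UNIV (\<lambda>i. {2 * m i, 2 * m i + 1})"
  proof (intro subsetI Pi_I)
    fix m' i assume "m' \<in> children m"
    then have "m' i div 2 = m i" by (simp add: children_def)
    then show "m' i \<in> {2 * m i, 2 * m i + 1}" by simp presburger
  qed
  show "finite (Pi UNIV (\<lambda>i. {2 * m i, 2 * m i + 1}))"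
    using finite_PiE[of UNIV "\<lambda>i. {2 * m i, 2 * m i + 1}"] by (simp add: PiE_UNIV_domain)
qed

lemma index_in_children: "index (k + 1) x \<in> children (index k x)"
  using index_parent[of k x] by (simp add: children_def)

lemma cell_child_subset: "m' \<in> children m \<Longrightarrow> cell (k + 1) m' \<subseteq> cell k m"
  using index_parent[of k] by (auto simp: children_def mem_cell_iff fun_eq_iff)

subsection \<open>Dyadic Hausdorff content\<close>

definition dyadic_cover :: "(nat \<Rightarrow> real^'d) \<Rightarrow> (nat \<Rightarrow> real) \<Rightarrow> (real^'d) set \<Rightarrow> bool" where
  "dyadic_cover p r E \<longleftrightarrow> (\<forall>i. (p i, r i) \<in> dyadic_params a l) \<and> E \<subseteq> (\<Union>i. cube (p i) (r i))"

lemma H_le_cover: "dyadic_cover p r E \<Longrightarrow> H E \<le> (\<Sum>i. ennreal (r i powr \<beta>))"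
  unfolding hdy_def dyadic_cover_def by (rule Inf_lower) blast

lemma obtain_cover_less:
  assumes "H E < X"
  obtains p r where "dyadic_cover p r E" "(\<Sum>i. ennreal (r i powr \<beta>)) < X"
  using assms unfolding hdy_def dyadic_cover_def by (subst (asm) Inf_less_iff) blast

lemma le_H_if_le_covers:
  "(\<And>p r. dyadic_cover p r E \<Longrightarrow> X \<le> (\<Sum>i. ennreal (r i powr \<beta>))) \<Longrightarrow> X \<le> H E"
  unfolding hdy_def dyadic_cover_def by (rule Inf_greatest) blast

lemma H_mono: "X \<subseteq> Y \<Longrightarrow> H X \<le> H Y"
  unfolding hdy_def by (rule Inf_superset_mono) blast

lemma dyadic_cover_cells:
  assumes "dyadic_cover p r E"
  obtains k m where "\<And>i. p i = corner (k i) (m i)" "\<And>i. r i = side (k i)"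
proof -
  have "\<forall>i. \<exists>km. p i = corner (fst km) (snd km) \<and> r i = side (fst km)"
    using assms dyadic_params_cell by (metis dyadic_cover_def fst_conv snd_conv)
  then obtain km where "\<And>i. p i = corner (fst (km i)) (snd (km i)) \<and> r i = side (fst (km i))"
    by metis
  then show ?thesis using that[of "\<lambda>i. fst (km i)" "\<lambda>i. snd (km i)"] by blast
qed

lemma ex_cell_content_less: "0 < \<delta> \<Longrightarrow> \<exists>k. cell_content k < \<delta>"
proof -
  assume "0 < \<delta>"
  have "cell_content (int n) = l powr \<beta> * (2 powr (-\<beta>)) ^ n" for n
    using side_length_pos
    by (simp add: cell_content_def side_def powr_mult powr_powr powr_realpow[symmetric] mult.commute)
  moreover have "(\<lambda>n. l powr \<beta> * (2 powr (-\<beta>)) ^ n) \<longlonglongrightarrow> l powr \<beta> * 0"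
    using beta_pos by (intro tendsto_intros) (simp add: powr_minus divide_simps)
  then have "\<forall>\<^sub>F n in sequentially. l powr \<beta> * (2 powr (-\<beta>)) ^ n < \<delta>"
    using \<open>0 < \<delta>\<close> by (simp add: order_tendstoD(2))
  ultimately show ?thesis
    by (metis (no_types, lifting) eventually_sequentially order_refl)
qed

text \<open>Indices outside \<open>I\<close> are filled with cells of arbitrarily small content.\<close>
lemma H_le_partial_cover:
  assumes "\<forall>i\<in>I. (p i, r i) \<in> dyadic_params a l" and "E \<subseteq> (\<Union>i\<in>I. cube (p i) (r i))"
  shows "H E \<le> (\<Sum>i. if i \<in> I then ennreal (r i powr \<beta>) else 0)"
proof (rule ennreal_le_epsilon)
  fix e :: real assume e: "0 < e"
  have "\<forall>i. \<exists>k. cell_content k < e * (1/2) ^ Suc i"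
    using e by (intro allI ex_cell_content_less) simp
  then obtain k where k: "\<And>i. cell_content (k i) < e * (1/2) ^ Suc i" by metis
  define p' where "p' i = (if i \<in> I then p i else corner (k i) (\<lambda>_. 0))" for i
  define r' where "r' i = (if i \<in> I then r i else side (k i))" for i
  have "dyadic_cover p' r' E"
    using assms cell_in_dyadic_params by (force simp: dyadic_cover_def p'_def r'_def)
  then have "H E \<le> (\<Sum>i. ennreal (r' i powr \<beta>))" by (rule H_le_cover)
  also have "\<dots> = (\<Sum>i. (if i \<in> I then ennreal (r i powr \<beta>) else 0)
                      + (if i \<in> I then 0 else ennreal (cell_content (k i))))"
    by (intro suminf_cong) (simp add: r'_def cell_content_def)
  also have "\<dots> = (\<Sum>i. if i \<in> I then ennreal (r i powr \<beta>) else 0)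
                  + (\<Sum>i. if i \<in> I then 0 else ennreal (cell_content (k i)))"
    by (rule suminf_add[symmetric]) auto
  also have "(\<Sum>i. if i \<in> I then 0 else ennreal (cell_content (k i))) \<le> (\<Sum>i. ennreal (e * (1/2) ^ Suc i))"
    by (intro suminf_le) (auto intro!: ennreal_leI less_imp_le[OF k] simp del: power_Suc)
  also have "\<dots> = ennreal e"
    using e by (intro suminf_ennreal_halves) simp
  finally show "H E \<le> (\<Sum>i. if i \<in> I then ennreal (r i powr \<beta>) else 0) + ennreal e"
    by (simp add: add_left_mono)
qed

lemma H_empty: "H {} = 0"
  using H_le_partial_cover[of "{}" _ _ "{}"] by simp

lemma H_countably_subadditive: "H (\<Union>n. E n) \<le> (\<Sum>n. H (E n))"
proof (rule ennreal_le_epsilon)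
  fix e :: real assume finite: "(\<Sum>n. H (E n)) < top" and e: "0 < e"
  have "\<exists>p r. dyadic_cover p r (E n) \<and>
          (\<Sum>i. ennreal (r i powr \<beta>)) < H (E n) + ennreal (e * (1/2) ^ Suc n)" for n
  proof -
    have "H (E n) < top"
      using finite ennreal_le_suminf[of "\<lambda>n. H (E n)" n] by (simp add: top.not_eq_extremum)
    then have "H (E n) < H (E n) + ennreal (e * (1/2) ^ Suc n)"
      using e ennreal_add_left_cancel_less[of "H (E n)" 0] by (simp del: power_Suc)
    then show ?thesis by (elim obtain_cover_less) blast
  qed
  then obtain p r where pr: "\<And>n. dyadic_cover (p n) (r n) (E n)"
    and sum_pr: "\<And>n. (\<Sum>i. ennreal (r n i powr \<beta>)) < H (E n) + ennreal (e * (1/2) ^ Suc n)"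
    by metis
  have "dyadic_cover (\<lambda>k. case_prod p (prod_decode k)) (\<lambda>k. case_prod r (prod_decode k)) (\<Union>n. E n)"
    unfolding dyadic_cover_def
  proof safe
    fix n x assume "x \<in> E n"
    then obtain i where "x \<in> cube (p n i) (r n i)" using pr[of n] by (auto simp: dyadic_cover_def)
    then show "x \<in> (\<Union>k. cube (case_prod p (prod_decode k)) (case_prod r (prod_decode k)))"
      by (intro UN_I[of "prod_encode (n, i)"]) auto
  qed (use pr in \<open>auto simp: dyadic_cover_def split: prod.split\<close>)
  then have "H (\<Union>n. E n) \<le> (\<Sum>k. ennreal (case_prod r (prod_decode k) powr \<beta>))"
    by (rule H_le_cover)
  also have "\<dots> = (\<Sum>n. \<Sum>i. ennreal (r n i powr \<beta>))"
    using suminf_ennreal_2dimen[where f="\<lambda>(n, i). ennreal (r n i powr \<beta>)"]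
    by (simp add: case_prod_beta)
  also have "\<dots> \<le> (\<Sum>n. H (E n) + ennreal (e * (1/2) ^ Suc n))"
    using sum_pr by (intro suminf_le) (simp_all add: less_imp_le del: power_Suc)
  also have "\<dots> = (\<Sum>n. H (E n)) + (\<Sum>n. ennreal (e * (1/2) ^ Suc n))"
    by (rule suminf_add[symmetric]) auto
  also have "(\<Sum>n. ennreal (e * (1/2) ^ Suc n)) = ennreal e"
    using e by (intro suminf_ennreal_halves) simp
  finally show "H (\<Union>n. E n) \<le> (\<Sum>n. H (E n)) + ennreal e" .
qed

lemma H_Un: "H (X \<union> Y) \<le> H X + H Y"
proof -
  define E where "E n = (if n = 0 then X else if n = 1 then Y else {})" for n :: nat
  have "X \<union> Y = (\<Union>n. E n)" by (auto simp: E_def split: if_splits)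
  then have "H (X \<union> Y) \<le> (\<Sum>n. H (E n))" using H_countably_subadditive by simp
  also have "(\<Sum>n. H (E n)) = (\<Sum>n\<in>{0,1}. H (E n))"
    by (rule suminf_finite) (auto simp: E_def H_empty)
  finally show ?thesis by (simp add: E_def)
qed

lemma H_le_cell_content:
  assumes "E \<subseteq> cell k m"
  shows "H E \<le> ennreal (cell_content k)"
proof -
  have "H E \<le> (\<Sum>i. if i \<in> {0} then ennreal (side k powr \<beta>) else 0)"
    using H_le_partial_cover[of "{0}" "\<lambda>_. corner k m" "\<lambda>_. side k" E] cell_in_dyadic_params assms
    by (simp add: cell_def)
  also have "\<dots> = ennreal (cell_content k)"
    by (subst suminf_finite[of "{0}"]) (auto simp: cell_content_def)
  finally show ?thesis .
qed

lemma H_cell: "H (cell k m) = ennreal (cell_content k)"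
proof (rule antisym)
  show "ennreal (cell_content k) \<le> H (cell k m)"
  proof (rule le_H_if_le_covers)
    fix p r assume cover: "dyadic_cover p r (cell k m)"
    then obtain ks ms where "\<And>i. p i = corner (ks i) (ms i)" "\<And>i. r i = side (ks i)"
      by (rule dyadic_cover_cells) blast
    then have "0 < r i" for i by (simp add: side_pos)
    moreover have "cube (corner k m) (side k) \<subseteq> (\<Union>i. cube (p i) (r i))"
      using cover by (simp add: dyadic_cover_def cell_def)
    ultimately show "ennreal (cell_content k) \<le> (\<Sum>i. ennreal (r i powr \<beta>))"
      unfolding cell_content_def by (rule cube_powr_le_cover_sum[OF beta_pos beta_le_dim side_pos])
  qed
qed (rule H_le_cell_content, rule order_refl)

lemma corner_shift_in_dyadic_params:
  assumes "0 \<le> j" "\<forall>i. v$i \<in> \<int>"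
  shows "(corner k m + side (k + j) *\<^sub>R v, side (k + j)) \<in> dyadic_params a l"
proof -
  have side_k: "side k = side (k + j) * 2 ^ nat j"
    using assms(1) by (simp add: side_add powr_realpow[symmetric] powr_add[symmetric])
  have v: "v$i = real_of_int \<lfloor>v$i\<rfloor>" for i
    using assms(2) by (auto elim!: Ints_cases)
  have "corner k m + side (k + j) *\<^sub>R v = corner (k + j) (\<lambda>i. 2 ^ nat j * m i + \<lfloor>v$i\<rfloor>)"
    unfolding corner_def vec_eq_iff by (auto simp: side_k algebra_simps v[symmetric])
  then show ?thesis using cell_in_dyadic_params by simp
qed

text \<open>Dyadic cubes of a cell are dyadic cubes of the grid, once the larger ones are
  replaced by the cell itself.\<close>
lemma H_le_hdy_cell:
  assumes E: "E \<subseteq> cell k m"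
  shows "H E \<le> hdy \<beta> (corner k m) (side k) E"
  unfolding hdy_def[of \<beta> "corner k m" "side k"]
proof (rule Inf_greatest, clarify)
  fix p :: "nat \<Rightarrow> real^'d" and s :: "nat \<Rightarrow> real"
  assume params: "\<forall>i. (p i, s i) \<in> dyadic_params (corner k m) (side k)"
    and cover: "E \<subseteq> (\<Union>i. cube (p i) (s i))"
  define p' where "p' i = (if s i \<le> side k then p i else corner k m)" for i
  define s' where "s' i = (if s i \<le> side k then s i else side k)" for i
  have "(p' i, s' i) \<in> dyadic_params a l" for i
  proof (cases "s i \<le> side k")
    case True
    from params obtain j v where p: "p i = corner k m + (2 powr (- real_of_int j) * side k) *\<^sub>R v"
      and "s i = 2 powr (- real_of_int j) * side k" and v: "\<forall>i. v$i \<in> \<int>"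
      unfolding dyadic_params_def by blast
    then have s: "s i = side (k + j)" by (simp add: side_add)
    then have "0 \<le> j" using True side_le_iff by simp
    then show ?thesis
      using corner_shift_in_dyadic_params[OF _ v, of j k m] True p s by (simp add: p'_def s'_def side_add)
  qed (simp add: p'_def s'_def cell_in_dyadic_params)
  moreover have "E \<subseteq> (\<Union>i. cube (p' i) (s' i))"
  proof
    fix x assume x: "x \<in> E"
    then obtain i where "x \<in> cube (p i) (s i)" using cover by blast
    then have "x \<in> cube (p' i) (s' i)" using x E by (auto simp: p'_def s'_def cell_def)
    then show "x \<in> (\<Union>i. cube (p' i) (s' i))" by blast
  qed
  ultimately have "dyadic_cover p' s' E"
    by (simp add: dyadic_cover_def)
  then have "H E \<le> (\<Sum>i. ennreal (s' i powr \<beta>))"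
    by (rule H_le_cover)
  also have "\<dots> \<le> (\<Sum>i. ennreal (s i powr \<beta>))"
    using beta_pos side_pos[of k]
    by (intro suminf_le ennreal_leI) (auto simp: s'_def powr_mono2)
  finally show "H E \<le> (\<Sum>i. ennreal (s i powr \<beta>))" .
qed

lemma cell_not_covered:
  assumes "H X + H Y < ennreal (cell_content k)"
  obtains y where "y \<in> cell k m" "y \<notin> X" "y \<notin> Y"
proof -
  have "\<not> cell k m \<subseteq> X \<union> Y"
  proof
    assume "cell k m \<subseteq> X \<union> Y"
    then have "H (cell k m) \<le> H X + H Y" using H_mono H_Un order_trans by blast
    then show False using assms H_cell[of k m] by simp
  qed
  then show ?thesis using that by blast
qed

lemma H_UN_le:
  fixes w :: "'s \<Rightarrow> ennreal"
  assumes "countable S" and le_w: "\<And>s. s \<in> S \<Longrightarrow> H (X s) \<le> w s"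
    and bound: "\<And>S'. finite S' \<Longrightarrow> S' \<subseteq> S \<Longrightarrow> sum w S' \<le> W"
  shows "H (\<Union>s\<in>S. X s) \<le> W"
proof (cases "S = {}")
  case True then show ?thesis by (simp add: H_empty)
next
  case False
  define e where "e = to_nat_on S"
  define f where "f = from_nat_into S"
  have fe: "f (e s) = s" if "s \<in> S" for s using assms(1) that by (simp add: e_def f_def)
  have fS: "f n \<in> S" for n using False by (simp add: f_def from_nat_into)
  define Y where "Y n = (if n \<in> e ` S then X (f n) else {})" for n
  define wn where "wn n = (if n \<in> e ` S then w (f n) else 0)" for n
  have "(\<Union>s\<in>S. X s) \<subseteq> (\<Union>n. Y n)"
    by (auto simp: Y_def fe intro!: exI[of _ "e _"])
  then have "H (\<Union>s\<in>S. X s) \<le> (\<Sum>n. H (Y n))"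
    using H_mono H_countably_subadditive order_trans by blast
  also have "\<dots> \<le> (\<Sum>n. wn n)"
    by (intro suminf_le) (auto simp: Y_def wn_def le_w fS H_empty)
  also have "\<dots> \<le> W"
  proof (rule suminf_le_const)
    fix N
    have inj: "inj_on f ({..<N} \<inter> e ` S)" by (rule inj_onI) (auto simp: fe)
    have "sum wn {..<N} = (\<Sum>n\<in>{..<N} \<inter> e ` S. w (f n))"
      by (simp add: wn_def sum.inter_restrict)
    also have "\<dots> = sum w (f ` ({..<N} \<inter> e ` S))"
      by (simp add: sum.reindex[OF inj])
    also have "\<dots> \<le> W" by (rule bound) (auto simp: fe)
    finally show "sum wn {..<N} \<le> W" .
  qed auto
  finally show ?thesis .
qed

lemma cells_meet_same_coarser:
  assumes "k \<le> k'" "cell k' m' \<inter> cell k m1 \<noteq> {}" "cell k' m' \<inter> cell k m2 \<noteq> {}"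
  shows "m1 = m2"
proof -
  obtain y1 y2 where "y1 \<in> cell k' m'" "y1 \<in> cell k m1" "y2 \<in> cell k' m'" "y2 \<in> cell k m2"
    using assms(2,3) by blast
  then have "corner k' m' \<in> cell k m1" "corner k' m' \<in> cell k m2"
    using cell_nested[OF assms(1)] corner_in_cell by blast+
  then show ?thesis by (simp add: mem_cell_iff)
qed

text \<open>A cover of \<open>E\<close> cheaper than a level-\<open>k\<close> cell uses only cubes of level above \<open>k\<close>,
  and each of them meets at most one cell of level \<open>k + 1\<close>.\<close>
lemma H_children_sum_le:
  assumes less: "H E < ennreal (cell_content k)" and M: "finite M"
  shows "(\<Sum>m'\<in>M. H (E \<inter> cell (k + 1) m')) \<le> H E"
proof (rule dense_ge)
  fix X assume "H E < X"
  with less have "H E < min X (ennreal (cell_content k))" by simp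
  then obtain p r where cover: "dyadic_cover p r E"
    and sum_less: "(\<Sum>i. ennreal (r i powr \<beta>)) < min X (ennreal (cell_content k))"
    by (rule obtain_cover_less)
  obtain lev mm where p: "\<And>i. p i = corner (lev i) (mm i)" and r: "\<And>i. r i = side (lev i)"
    using cover by (rule dyadic_cover_cells) blast
  define c where "c i = ennreal (r i powr \<beta>)" for i
  have cube_p: "cube (p i) (r i) = cell (lev i) (mm i)" for i by (simp add: cell_def p r)
  have finer: "k + 1 \<le> lev i" for i
  proof -
    have "ennreal (r i powr \<beta>) < ennreal (cell_content k)"
      using le_less_trans[OF ennreal_le_suminf[of "\<lambda>i. ennreal (r i powr \<beta>)" i]] sum_less by simp
    then have "r i < side k"
      using cell_content_le_powr[of k "r i"] by (auto simp: not_le[symmetric] ennreal_le_iff2)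
    then show ?thesis using side_less_iff r by simp
  qed
  define I where "I m' = {i. cube (p i) (r i) \<inter> cell (k + 1) m' \<noteq> {}}" for m'
  have H_child: "H (E \<inter> cell (k + 1) m') \<le> (\<Sum>i. if i \<in> I m' then c i else 0)" for m'
    unfolding c_def
  proof (rule H_le_partial_cover)
    show "\<forall>i\<in>I m'. (p i, r i) \<in> dyadic_params a l" using cover by (simp add: dyadic_cover_def)
    show "E \<inter> cell (k + 1) m' \<subseteq> (\<Union>i\<in>I m'. cube (p i) (r i))"
      using cover by (fastforce simp: dyadic_cover_def I_def)
  qed
  have unique_child: "m1 = m2" if "i \<in> I m1" "i \<in> I m2" for i m1 m2
    using cells_meet_same_coarser[OF finer] that by (simp add: I_def cube_p)
  have "(\<Sum>m'\<in>M. if i \<in> I m' then c i else 0) \<le> c i" for i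
  proof (cases "\<exists>m0\<in>M. i \<in> I m0")
    case True
    then obtain m0 where "m0 \<in> M" "i \<in> I m0" by blast
    then have "(\<Sum>m'\<in>M. if i \<in> I m' then c i else 0) = (\<Sum>m'\<in>M. if m' = m0 then c i else 0)"
      using unique_child by (intro sum.cong) auto
    then show ?thesis using \<open>m0 \<in> M\<close> M by simp
  qed simp
  then have "(\<Sum>m'\<in>M. \<Sum>i. if i \<in> I m' then c i else 0) \<le> (\<Sum>i. c i)"
    by (subst suminf_sum[symmetric]) (auto intro: suminf_le)
  then have "(\<Sum>m'\<in>M. H (E \<inter> cell (k + 1) m')) \<le> (\<Sum>i. c i)"
    by (rule order_trans[OF sum_mono[OF H_child]])
  moreover have "(\<Sum>i. c i) \<le> X"
    using sum_less by (simp add: c_def less_imp_le)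
  ultimately show "(\<Sum>m'\<in>M. H (E \<inter> cell (k + 1) m')) \<le> X"
    by (rule order_trans)
qed

lemma H_le_density_cover:
  assumes A: "A \<subseteq> cell k0 m0" "A \<subseteq> G" and \<eta>: "0 \<le> \<eta>"
    and density: "\<And>x k. x \<in> A \<Longrightarrow> k0 \<le> k \<Longrightarrow> H (G \<inter> cell k (index k x)) \<le> ennreal (\<eta> * cell_content k)"
    and cover: "dyadic_cover p r A"
  shows "H A \<le> ennreal \<eta> * (\<Sum>i. ennreal (r i powr \<beta>))"
proof -
  obtain lev mm where p: "\<And>i. p i = corner (lev i) (mm i)" and r: "\<And>i. r i = side (lev i)"
    using cover by (rule dyadic_cover_cells) blast
  have piece: "H (A \<inter> cube (p i) (r i)) \<le> ennreal (\<eta> * r i powr \<beta>)" for i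
  proof (cases "A \<inter> cube (p i) (r i) = {}")
    case False
    then obtain x where x: "x \<in> A" "x \<in> cell (lev i) (mm i)" by (auto simp: cell_def p r)
    then have mm: "mm i = index (lev i) x" by (simp add: mem_cell_iff)
    show ?thesis
    proof (cases "k0 \<le> lev i")
      case True
      have "H (A \<inter> cube (p i) (r i)) \<le> H (G \<inter> cell (lev i) (index (lev i) x))"
        using A by (intro H_mono) (auto simp: cell_def p r mm)
      also have "\<dots> \<le> ennreal (\<eta> * cell_content (lev i))" using density x True by blast
      finally show ?thesis by (simp add: r cell_content_def)
    next
      case False
      have "index k0 x = m0" using x(1) A(1) mem_cell_iff by blast
      then have "H (A \<inter> cube (p i) (r i)) \<le> H (G \<inter> cell k0 (index k0 x))"
        using A by (intro H_mono) auto
      also have "\<dots> \<le> ennreal (\<eta> * cell_content k0)" using density x by simp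
      also have "\<dots> \<le> ennreal (\<eta> * cell_content (lev i))"
        using False \<eta> cell_content_le_iff[of k0 "lev i"] by (intro ennreal_leI mult_left_mono) auto
      finally show ?thesis by (simp add: r cell_content_def)
    qed
  qed (simp add: H_empty)
  have "H A \<le> H (\<Union>i. A \<inter> cube (p i) (r i))"
    using cover by (intro H_mono) (auto simp: dyadic_cover_def)
  also have "\<dots> \<le> (\<Sum>i. H (A \<inter> cube (p i) (r i)))" by (rule H_countably_subadditive)
  also have "\<dots> \<le> (\<Sum>i. ennreal (\<eta> * r i powr \<beta>))" by (intro suminf_le piece) auto
  also have "\<dots> = ennreal \<eta> * (\<Sum>i. ennreal (r i powr \<beta>))" using \<eta> by (simp add: ennreal_mult)
  finally show ?thesis .
qed

lemma H_null_if_density_less_one: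
  assumes A: "A \<subseteq> cell k0 m0" "A \<subseteq> G" and \<eta>: "0 \<le> \<eta>" "\<eta> < 1"
    and density: "\<And>x k. x \<in> A \<Longrightarrow> k0 \<le> k \<Longrightarrow> H (G \<inter> cell k (index k x)) \<le> ennreal (\<eta> * cell_content k)"
  shows "H A = 0"
proof -
  obtain h where h: "H A = ennreal h" "0 \<le> h"
    using H_le_cell_content[OF A(1)] by (cases "H A") (auto simp: top_unique)
  have "h \<le> \<eta> * h + \<delta>" if "0 < \<delta>" for \<delta>
  proof -
    have "H A < ennreal (h + \<delta>)" using h that by (simp add: ennreal_lessI)
    then obtain p r where cover: "dyadic_cover p r A"
      and less: "(\<Sum>i. ennreal (r i powr \<beta>)) < ennreal (h + \<delta>)"
      by (rule obtain_cover_less)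
    have "ennreal h \<le> ennreal \<eta> * (\<Sum>i. ennreal (r i powr \<beta>))"
      using H_le_density_cover[OF A \<eta>(1) density cover] unfolding h(1) .
    also have "\<dots> \<le> ennreal \<eta> * ennreal (h + \<delta>)"
      using less by (intro mult_left_mono) auto
    also have "\<dots> = ennreal (\<eta> * (h + \<delta>))"
      using \<eta> h that by (simp add: ennreal_mult)
    finally have "h \<le> \<eta> * (h + \<delta>)"
      using \<eta> h that by (simp add: ennreal_le_iff)
    also have "\<dots> \<le> \<eta> * h + \<delta>"
      using \<eta> that by (simp add: algebra_simps mult_left_le_one_le)
    finally show ?thesis .
  qed
  then have "h \<le> \<eta> * h" by (rule field_le_epsilon)
  then have "(1 - \<eta>) * h \<le> 0" by (simp add: algebra_simps)
  then have "h = 0" using \<eta> h(2) by (simp add: mult_le_0_iff)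
  then show ?thesis using h by simp
qed

subsection \<open>Calderon-Zygmund decomposition\<close>

definition heavy :: "(real^'d) set \<Rightarrow> int \<Rightarrow> ('d \<Rightarrow> int) \<Rightarrow> bool" where
  "heavy F k m \<longleftrightarrow> ennreal (cell_content k / 2) < H (F \<inter> cell k m)"

definition stopping_cells :: "(real^'d) set \<Rightarrow> int \<Rightarrow> ('d \<Rightarrow> int) \<Rightarrow> (int \<times> ('d \<Rightarrow> int)) set" where
  "stopping_cells F k0 m0 = {(k, m). k0 \<le> k \<and> index k0 (corner k m) = m0 \<and> heavy F k m \<and>
      (\<forall>j. k0 \<le> j \<and> j < k \<longrightarrow> \<not> heavy F j (index j (corner k m)))}"

lemma heavy_ancestor_of_stopping_cell:
  assumes "(k, m) \<in> stopping_cells F k0 m0" "k0 \<le> j" "j \<le> k"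
  shows "heavy F j (index j (corner k m)) \<longleftrightarrow> j = k"
  using assms by (auto simp: stopping_cells_def index_corner)

lemma stopping_cell_below:
  assumes "(k, m) \<in> stopping_cells F k0 m0" "\<not> heavy F k0 m0"
  shows "k0 < k" and "cell k m \<subseteq> cell k0 m0"
    and "\<not> heavy F (k - 1) (index (k - 1) (corner k m))"
proof -
  have k: "k0 \<le> k" and m0: "index k0 (corner k m) = m0"
    using assms(1) by (auto simp: stopping_cells_def)
  show "k0 < k"
    using assms heavy_ancestor_of_stopping_cell[OF assms(1) order_refl k] m0 k by fastforce
  then show "\<not> heavy F (k - 1) (index (k - 1) (corner k m))"
    using assms(1) by (simp add: stopping_cells_def)
  have "corner k m \<in> cell k0 m0" using m0 by (simp add: mem_cell_iff)
  then show "cell k m \<subseteq> cell k0 m0" using cell_nested[OF k _ corner_in_cell] by blast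
qed

definition cells_below :: "(int \<times> ('d \<Rightarrow> int)) set \<Rightarrow> int \<Rightarrow> ('d \<Rightarrow> int) \<Rightarrow> (int \<times> ('d \<Rightarrow> int)) set" where
  "cells_below W j m = {(k, m')\<in>W. j \<le> k \<and> index j (corner k m') = m}"

lemma cells_below_heavy:
  assumes "W \<subseteq> stopping_cells F k0 m0" "k0 \<le> j" "heavy F j m"
  shows "cells_below W j m \<subseteq> {(j, m)}"
  using assms heavy_ancestor_of_stopping_cell by (force simp: cells_below_def index_corner)

text \<open>A stopping cell at the level of a light cell would be that cell, which is not heavy.\<close>
lemma cells_below_light:
  assumes W: "W \<subseteq> stopping_cells F k0 m0" and "k0 \<le> j" "\<not> heavy F j m"
  shows "cells_below W j m = (\<Union>m'\<in>children m. cells_below W (j + 1) m')"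
proof safe
  fix k m' assume km: "(k, m') \<in> cells_below W j m"
  then have "j < k"
    using assms heavy_ancestor_of_stopping_cell[of k m' F k0 m0 j] by (force simp: cells_below_def)
  then show "(k, m') \<in> (\<Union>m''\<in>children m. cells_below W (j + 1) m'')"
    using km index_in_children[of j "corner k m'"]
    by (auto simp: cells_below_def index_corner intro!: bexI[of _ "index (j + 1) (corner k m')"])
next
  fix k m' m'' assume "m'' \<in> children m" "(k, m') \<in> cells_below W (j + 1) m''"
  then show "(k, m') \<in> cells_below W j m"
    using index_parent[of j "corner k m'"] by (auto simp: cells_below_def children_def fun_eq_iff)
qed

lemma stopping_cells_packing_below:
  assumes W: "finite W" "W \<subseteq> stopping_cells F k0 m0"
  shows "k0 \<le> j \<Longrightarrow> (\<And>k m. (k, m) \<in> W \<Longrightarrow> k < j + int n) \<Longrightarrow>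
    (\<Sum>(k, _)\<in>cells_below W j m. ennreal (cell_content k)) \<le> 2 * H (F \<inter> cell j m)"
proof (induction n arbitrary: j m)
  case 0
  then have "cells_below W j m = {}" by (force simp: cells_below_def)
  then show ?case by simp
next
  case (Suc n)
  show ?case
  proof (cases "heavy F j m")
    case True
    have "(\<Sum>(k, _)\<in>cells_below W j m. ennreal (cell_content k)) \<le> (\<Sum>(k, _)\<in>{(j, m)}. ennreal (cell_content k))"
      by (rule sum_mono2[OF _ cells_below_heavy[OF W(2) Suc.prems(1) True]]) auto
    also have "\<dots> = 2 * ennreal (cell_content j / 2)"
      using ennreal_mult[of 2 "cell_content j / 2"] cell_content_pos[of j] by simp
    also have "\<dots> \<le> 2 * H (F \<inter> cell j m)"
      using True by (intro mult_left_mono) (auto simp: heavy_def)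
    finally show ?thesis .
  next
    case False
    then have less: "H (F \<inter> cell j m) < ennreal (cell_content j)"
      using cell_content_pos[of j] by (auto simp: heavy_def not_less ennreal_lessI intro: le_less_trans)
    have "finite (cells_below W (j + 1) m')" for m'
      by (rule finite_subset[OF _ W(1)]) (auto simp: cells_below_def)
    then have "(\<Sum>(k, _)\<in>cells_below W j m. ennreal (cell_content k))
        = (\<Sum>m'\<in>children m. \<Sum>(k, _)\<in>cells_below W (j + 1) m'. ennreal (cell_content k))"
      unfolding cells_below_light[OF W(2) Suc.prems(1) False] using finite_children
      by (subst sum.UNION_disjoint) (auto simp: cells_below_def)
    also have "\<dots> \<le> (\<Sum>m'\<in>children m. 2 * H (F \<inter> cell (j + 1) m'))"
    proof (intro sum_mono Suc.IH)
      fix k m' assume "(k, m') \<in> W"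
      then show "k < j + 1 + int n" using Suc.prems(2)[of k m'] by simp
    qed (use Suc.prems(1) in simp)
    also have "\<dots> = 2 * (\<Sum>m'\<in>children m. H ((F \<inter> cell j m) \<inter> cell (j + 1) m'))"
      unfolding sum_distrib_left
      by (intro sum.cong refl arg_cong[where f="\<lambda>X. 2 * H X"]) (use cell_child_subset in blast)
    also have "\<dots> \<le> 2 * H (F \<inter> cell j m)"
      using H_children_sum_le[OF less finite_children] by (intro mult_left_mono) auto
    finally show ?thesis .
  qed
qed

lemma stopping_cells_packing:
  assumes W: "finite W" "W \<subseteq> stopping_cells F k0 m0"
  shows "(\<Sum>(k, m)\<in>W. ennreal (cell_content k)) \<le> 2 * H (F \<inter> cell k0 m0)"
proof -
  define N where "N = Max (insert k0 (fst ` W))"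
  have "k < k0 + int (nat (N + 1 - k0))" if "(k, m) \<in> W" for k m
  proof -
    have "k \<le> N" "k0 \<le> N"
      unfolding N_def using W(1) that by (intro Max_ge; force)+
    then show ?thesis by linarith
  qed
  moreover have "cells_below W k0 m0 = W"
    using W(2) by (auto simp: cells_below_def stopping_cells_def)
  ultimately show ?thesis
    using stopping_cells_packing_below[OF W order_refl] by (metis (no_types, lifting))
qed

lemma H_outside_stopping_cells:
  assumes F: "F \<subseteq> cell k0 m0"
  shows "H (F - (\<Union>(k, m)\<in>stopping_cells F k0 m0. cell k m)) = 0"
proof (rule H_null_if_density_less_one[of _ k0 m0 F "1/2"])
  fix x k assume x: "x \<in> F - (\<Union>(k, m)\<in>stopping_cells F k0 m0. cell k m)" and k: "k0 \<le> k"
  show "H (F \<inter> cell k (index k x)) \<le> ennreal (1/2 * cell_content k)"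
  proof (rule ccontr)
    assume "\<not> ?thesis"
    then have "heavy F (k0 + int (nat (k - k0))) (index (k0 + int (nat (k - k0))) x)"
      using k by (simp add: heavy_def not_le)
    then have ex: "\<exists>n. heavy F (k0 + int n) (index (k0 + int n) x)" ..
    define n where "n = (LEAST n. heavy F (k0 + int n) (index (k0 + int n) x))"
    have n: "heavy F (k0 + int n) (index (k0 + int n) x)"
      unfolding n_def using ex by (rule LeastI_ex)
    have least: "\<not> heavy F (k0 + int n') (index (k0 + int n') x)" if "n' < n" for n'
      using that unfolding n_def by (rule not_less_Least)
    have "\<not> heavy F j (index j x)" if "k0 \<le> j" "j < k0 + int n" for j
      using least[of "nat (j - k0)"] that by simp
    moreover have "index k0 x = m0" using x F by (auto simp: mem_cell_iff)
    ultimately have "(k0 + int n, index (k0 + int n) x) \<in> stopping_cells F k0 m0"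
      using n by (simp add: stopping_cells_def index_coarser_corner)
    then show False using x mem_cell_index by blast
  qed
qed (use F in auto)

end

section \<open>John-Nirenberg iteration\<close>

locale dyadic_bmo = dyadic_grid \<beta> a l for \<beta> :: real and a :: "real^'d" and l :: real +
  fixes u :: "real^'d \<Rightarrow> real" and B :: real and center :: "int \<Rightarrow> ('d \<Rightarrow> int) \<Rightarrow> real"
  assumes B_pos: "0 < B"
    and mean_oscillation: "\<And>k m. 0 \<le> k \<Longrightarrow> cell k m \<subseteq> cell 0 (\<lambda>_. 0) \<Longrightarrow>
        choq H (cell k m) (\<lambda>x. \<bar>u x - center k m\<bar>) \<le> ennreal (B * cell_content k)"
begin

abbreviation level_set :: "int \<Rightarrow> ('d \<Rightarrow> int) \<Rightarrow> real \<Rightarrow> real \<Rightarrow> (real^'d) set" where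
  "level_set k m c t \<equiv> {x\<in>cell k m. t < \<bar>u x - c\<bar>}"

text \<open>\<open>lam\<close> makes the set where \<open>u\<close> leaves a mean by more than \<open>lam\<close> light in the top cell;
  \<open>mu\<close> makes the \<open>mu\<close>-level sets of a cell and of its parent too small to cover the cell.\<close>
definition lam :: real where "lam = 4 * B"
definition mu :: real where "mu = 4 * (1 + 2 powr \<beta>) * B"
definition gap :: real where "gap = lam + 3 * mu"

lemma lam_pos: "0 < lam"
  using B_pos by (simp add: lam_def)

lemma mu_pos: "0 < mu"
  using B_pos by (simp add: mu_def add_pos_nonneg)

lemma lam_le_gap: "lam \<le> gap"
  using mu_pos by (simp add: gap_def)

lemma level_set_le:
  assumes "0 \<le> k" "cell k m \<subseteq> cell 0 (\<lambda>_. 0)" "0 < t"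
  shows "H (level_set k m (center k m) t) \<le> ennreal (B * cell_content k / t)"
proof -
  have "ennreal t * H (level_set k m (center k m) t) \<le> ennreal (B * cell_content k)"
    by (rule order_trans[OF choq_markov[OF H_mono assms(3)] mean_oscillation[OF assms(1,2)]])
  then have "H (level_set k m (center k m) t) \<le> ennreal (1/t) * ennreal (B * cell_content k)"
    by (rule ennreal_le_divide_of_mult_le[OF assms(3)])
  also have "\<dots> = ennreal (B * cell_content k / t)"
    using assms(3) B_pos cell_content_pos[of k] by (simp add: ennreal_mult[symmetric])
  finally show ?thesis .
qed

lemma center_parent_dist:
  assumes k: "0 \<le> k - 1" and sub: "cell k m \<subseteq> cell (k - 1) m'"
    and top: "cell (k - 1) m' \<subseteq> cell 0 (\<lambda>_. 0)"
  shows "\<bar>center k m - center (k - 1) m'\<bar> \<le> 2 * mu"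
proof -
  define X where "X = level_set k m (center k m) mu"
  define Y where "Y = level_set k m (center (k - 1) m') mu"
  have "H X \<le> ennreal (B * cell_content k / mu)"
    unfolding X_def using k sub top mu_pos by (intro level_set_le) auto
  moreover have "H Y \<le> ennreal (B * cell_content (k - 1) / mu)"
  proof -
    have "H Y \<le> H (level_set (k - 1) m' (center (k - 1) m') mu)"
      unfolding Y_def using sub by (intro H_mono) auto
    also have "\<dots> \<le> ennreal (B * cell_content (k - 1) / mu)"
      by (rule level_set_le[OF k top mu_pos])
    finally show ?thesis .
  qed
  ultimately have "H X + H Y \<le> ennreal (B * cell_content k / mu) + ennreal (B * cell_content (k - 1) / mu)"
    by (rule add_mono)
  also have "\<dots> = ennreal (B * cell_content k / mu + B * cell_content (k - 1) / mu)"
    using B_pos cell_content_pos[of k] cell_content_pos[of "k - 1"] mu_pos by (subst ennreal_plus) auto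
  also have "B * cell_content k / mu + B * cell_content (k - 1) / mu = cell_content k / 4"
  proof -
    have "mu \<noteq> 0" using mu_pos by simp
    then show ?thesis unfolding cell_content_parent mu_def
      by (simp add: divide_simps) (simp add: algebra_simps)
  qed
  also have "ennreal (cell_content k / 4) < ennreal (cell_content k)"
    using cell_content_pos[of k] by (simp add: ennreal_lessI)
  finally obtain y where "y \<in> cell k m" "y \<notin> X" "y \<notin> Y"
    by (rule cell_not_covered)
  then show ?thesis by (auto simp: X_def Y_def)
qed

lemma center_dist_if_light:
  assumes k: "0 \<le> k" and top: "cell k m \<subseteq> cell 0 (\<lambda>_. 0)"
    and light: "H (level_set k m c0 lam) \<le> ennreal (cell_content k / 2)"
  shows "\<bar>c0 - center k m\<bar> \<le> lam + mu"
proof -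
  define X where "X = level_set k m c0 lam"
  define Y where "Y = level_set k m (center k m) mu"
  have "B * cell_content k / mu = cell_content k / (4 * (1 + 2 powr \<beta>))"
    using B_pos by (simp add: mu_def)
  also have "\<dots> \<le> cell_content k / 8"
    using one_le_two_powr_beta cell_content_pos[of k] by (intro divide_left_mono) auto
  finally have "B * cell_content k / mu \<le> cell_content k / 8" .
  then have "H Y \<le> ennreal (cell_content k / 8)"
    unfolding Y_def by (rule order_trans[OF level_set_le[OF k top mu_pos] ennreal_leI])
  then have "H X + H Y \<le> ennreal (cell_content k / 2) + ennreal (cell_content k / 8)"
    using light unfolding X_def by (rule add_mono[rotated])
  also have "\<dots> = ennreal (cell_content k / 2 + cell_content k / 8)"
    using cell_content_pos[of k] by (subst ennreal_plus) auto
  also have "\<dots> < ennreal (cell_content k)"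
    using cell_content_pos[of k] by (simp add: ennreal_lessI)
  finally obtain y where "y \<in> cell k m" "y \<notin> X" "y \<notin> Y"
    by (rule cell_not_covered)
  then show ?thesis by (auto simp: X_def Y_def)
qed

lemma center_dist_stopping_cell:
  assumes k0: "0 \<le> k0" and top: "cell k0 m0 \<subseteq> cell 0 (\<lambda>_. 0)"
    and stop: "(k, m) \<in> stopping_cells (level_set k0 m0 c0 lam) k0 m0"
    and light: "\<not> heavy (level_set k0 m0 c0 lam) k0 m0"
  shows "\<bar>c0 - center k m\<bar> \<le> gap"
proof -
  define p where "p = index (k - 1) (corner k m)"
  note below = stopping_cell_below[OF stop light]
  have parent: "cell k m \<subseteq> cell (k - 1) p"
    using cell_nested[of "k - 1" k "corner k m"] corner_in_cell mem_cell_index by (simp add: p_def)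
  have "corner k m \<in> cell k0 m0" using below(2) corner_in_cell by blast
  then have parent_below: "cell (k - 1) p \<subseteq> cell k0 m0"
    using cell_nested[of k0 "k - 1" "corner k m"] below(1) mem_cell_index by (simp add: p_def)
  then have "level_set (k - 1) p c0 lam = level_set k0 m0 c0 lam \<inter> cell (k - 1) p"
    by auto
  then have "H (level_set (k - 1) p c0 lam) \<le> ennreal (cell_content (k - 1) / 2)"
    using below(3) by (simp add: heavy_def p_def not_less)
  then have "\<bar>c0 - center (k - 1) p\<bar> \<le> lam + mu"
    using k0 below(1) parent_below top by (intro center_dist_if_light) auto
  moreover have "\<bar>center k m - center (k - 1) p\<bar> \<le> 2 * mu"
    using k0 below(1) parent parent_below top by (intro center_parent_dist) auto
  ultimately show ?thesis by (simp add: gap_def)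
qed

lemma level_set_lam_light:
  assumes "choq H (cell k0 m0) (\<lambda>x. \<bar>u x - c0\<bar>) \<le> ennreal (B * cell_content k0)"
  shows "\<not> heavy (level_set k0 m0 c0 lam) k0 m0"
proof -
  have "ennreal lam * H (level_set k0 m0 c0 lam) \<le> ennreal (B * cell_content k0)"
    using order_trans[OF choq_markov[OF H_mono lam_pos] assms] .
  then have "H (level_set k0 m0 c0 lam) \<le> ennreal (1 / lam) * ennreal (B * cell_content k0)"
    by (rule ennreal_le_divide_of_mult_le[OF lam_pos])
  also have "\<dots> \<le> ennreal (cell_content k0 / 2)"
    using B_pos cell_content_pos[of k0] by (simp add: lam_def ennreal_mult[symmetric])
  finally show ?thesis by (simp add: heavy_def Int_absorb2 not_less)
qed

lemma level_set_subset_stopping_cells: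
  fixes k0 :: int and m0 :: "'d \<Rightarrow> int" and c0 :: real
  defines "F \<equiv> level_set k0 m0 c0 lam"
  assumes k0: "0 \<le> k0" and top: "cell k0 m0 \<subseteq> cell 0 (\<lambda>_. 0)"
    and light: "\<not> heavy F k0 m0" and t: "lam \<le> t"
  shows "level_set k0 m0 c0 t \<subseteq> (F - (\<Union>(k, m)\<in>stopping_cells F k0 m0. cell k m))
           \<union> (\<Union>(k, m)\<in>stopping_cells F k0 m0. level_set k m (center k m) (t - gap))"
proof clarify
  fix x assume x: "x \<in> cell k0 m0" "t < \<bar>u x - c0\<bar>"
    and not_near: "x \<notin> (\<Union>(k, m)\<in>stopping_cells F k0 m0. level_set k m (center k m) (t - gap))"
  show "x \<in> F - (\<Union>(k, m)\<in>stopping_cells F k0 m0. cell k m)"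
  proof safe
    show "x \<in> F" using x t by (simp add: F_def)
    fix k m assume "(k, m) \<in> stopping_cells F k0 m0" "x \<in> cell k m"
    moreover have "\<bar>c0 - center k m\<bar> \<le> gap"
      using center_dist_stopping_cell[OF k0 top] \<open>(k, m) \<in> stopping_cells F k0 m0\<close> light
      by (simp add: F_def)
    ultimately have "t - gap < \<bar>u x - center k m\<bar>" using x(2) by linarith
    then show False using not_near \<open>(k, m) \<in> stopping_cells F k0 m0\<close> \<open>x \<in> cell k m\<close> by blast
  qed
qed

text \<open>One step of the John-Nirenberg iteration: the Calderon-Zygmund cubes of the
  \<open>lam\<close>-level set have total content at most twice its \<open>H\<close>, and on each of them
  the mean has moved by at most \<open>gap\<close>.\<close>
lemma level_set_decay_step:
  assumes k0: "0 \<le> k0" and top: "cell k0 m0 \<subseteq> cell 0 (\<lambda>_. 0)"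
    and mean: "choq H (cell k0 m0) (\<lambda>x. \<bar>u x - c0\<bar>) \<le> ennreal (B * cell_content k0)"
    and \<theta>: "0 \<le> \<theta>" and t: "lam \<le> t"
    and finer: "\<And>k m. k0 \<le> k \<Longrightarrow> cell k m \<subseteq> cell k0 m0 \<Longrightarrow>
        H (level_set k m (center k m) (t - gap)) \<le> ennreal (\<theta> * cell_content k)"
  shows "ennreal lam * H (level_set k0 m0 c0 t) \<le> ennreal (2 * \<theta>) * choq H (cell k0 m0) (\<lambda>x. \<bar>u x - c0\<bar>)"
proof -
  define F where "F = level_set k0 m0 c0 lam"
  define S where "S = stopping_cells F k0 m0"
  have light: "\<not> heavy F k0 m0" unfolding F_def by (rule level_set_lam_light[OF mean])
  have "H (\<Union>(k, m)\<in>S. level_set k m (center k m) (t - gap)) \<le> ennreal \<theta> * (2 * H F)"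
  proof (rule H_UN_le)
    show "countable S" by (rule countable_subset[OF subset_UNIV]) simp
    show "H (case s of (k, m) \<Rightarrow> level_set k m (center k m) (t - gap))
        \<le> ennreal \<theta> * ennreal (cell_content (fst s))" if "s \<in> S" for s
    proof -
      obtain k m where s: "s = (k, m)" by fastforce
      have "k0 \<le> k" "cell k m \<subseteq> cell k0 m0"
        using stopping_cell_below(1,2)[OF _ light, of k m] that by (auto simp: S_def s)
      then have "H (level_set k m (center k m) (t - gap)) \<le> ennreal (\<theta> * cell_content k)"
        by (rule finer)
      then show ?thesis using \<theta> cell_content_pos[of k] by (simp add: s ennreal_mult)
    qed
    show "(\<Sum>s\<in>S'. ennreal \<theta> * ennreal (cell_content (fst s))) \<le> ennreal \<theta> * (2 * H F)"
      if "finite S'" "S' \<subseteq> S" for S'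
      using stopping_cells_packing[OF that[unfolded S_def]]
      by (simp add: sum_distrib_left[symmetric] case_prod_beta F_def Int_absorb2 mult_left_mono)
  qed
  moreover have "H (F - (\<Union>(k, m)\<in>S. cell k m)) = 0"
    unfolding S_def F_def by (rule H_outside_stopping_cells) auto
  ultimately have "H (level_set k0 m0 c0 t) \<le> ennreal \<theta> * (2 * H F)"
    using order_trans[OF H_mono[OF level_set_subset_stopping_cells[OF k0 top light[unfolded F_def] t]] H_Un]
    by (simp add: F_def S_def)
  then have "ennreal lam * H (level_set k0 m0 c0 t) \<le> ennreal lam * (ennreal \<theta> * (2 * H F))"
    by (rule mult_left_mono) simp
  also have "\<dots> = ennreal (2 * \<theta>) * (ennreal lam * H F)"
    using \<theta> ennreal_mult[of 2 \<theta>] by (simp add: ac_simps)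
  also have "\<dots> \<le> ennreal (2 * \<theta>) * choq H (cell k0 m0) (\<lambda>x. \<bar>u x - c0\<bar>)"
    unfolding F_def by (intro mult_left_mono choq_markov[OF H_mono lam_pos] zero_le)
  finally show ?thesis .
qed

lemma gap_pos: "0 < gap"
  using lam_pos lam_le_gap by linarith

lemma level_set_geometric_decay:
  "0 \<le> k \<Longrightarrow> cell k m \<subseteq> cell 0 (\<lambda>_. 0) \<Longrightarrow>
    H (level_set k m (center k m) t) \<le> ennreal ((1/2) ^ nat \<lfloor>t / gap\<rfloor> * cell_content k)"
proof (induction "nat \<lfloor>t / gap\<rfloor>" arbitrary: t k m)
  case 0
  then show ?case
    by (metis (no_types, lifting) H_le_cell_content mem_Collect_eq mult_1 power_0 subsetI)
next
  case (Suc n)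
  have floor_t: "\<lfloor>t / gap\<rfloor> = int n + 1"
    using Suc.hyps(2) by (simp add: eq_commute[of "Suc n"] nat_eq_iff split: if_splits)
  then have "1 \<le> t / gap" by linarith
  then have t: "gap \<le> t" using gap_pos by simp
  have "\<lfloor>(t - gap) / gap\<rfloor> = int n"
    using floor_t gap_pos by (simp add: diff_divide_distrib)
  then have n: "n = nat \<lfloor>(t - gap) / gap\<rfloor>" by simp
  have "ennreal lam * H (level_set k m (center k m) t)
          \<le> ennreal (2 * (1/2) ^ n) * choq H (cell k m) (\<lambda>x. \<bar>u x - center k m\<bar>)"
  proof (rule level_set_decay_step[OF Suc.prems mean_oscillation[OF Suc.prems]])
    show "lam \<le> t" using t lam_le_gap by linarith
    fix k' m' assume "k \<le> k'" "cell k' m' \<subseteq> cell k m"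
    then have "0 \<le> k'" "cell k' m' \<subseteq> cell 0 (\<lambda>_. 0)" using Suc.prems by auto
    then show "H (level_set k' m' (center k' m') (t - gap)) \<le> ennreal ((1/2) ^ n * cell_content k')"
      using Suc.hyps(1)[OF n] by (simp add: n[symmetric])
  qed simp
  also have "\<dots> \<le> ennreal (2 * (1/2) ^ n) * ennreal (B * cell_content k)"
    by (intro mult_left_mono mean_oscillation Suc.prems) simp
  finally have "H (level_set k m (center k m) t)
      \<le> ennreal (1 / lam) * (ennreal (2 * (1/2) ^ n) * ennreal (B * cell_content k))"
    by (rule ennreal_le_divide_of_mult_le[OF lam_pos])
  also have "\<dots> = ennreal ((1/2) ^ Suc n * cell_content k)"
    using B_pos cell_content_pos[of k] by (simp add: ennreal_mult[symmetric] lam_def field_simps)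
  finally show ?case by (simp add: Suc.hyps(2)[symmetric])
qed

lemma level_set_small_levels:
  assumes mean: "choq H (cell 0 (\<lambda>_. 0)) (\<lambda>x. \<bar>u x - c0\<bar>) \<le> ennreal (B * cell_content 0)"
    and t: "B \<le> t" "t < lam"
  shows "H (level_set 0 (\<lambda>_. 0) c0 t)
           \<le> ennreal (2 / B * 2 powr (- t / gap)) * choq H (cell 0 (\<lambda>_. 0)) (\<lambda>x. \<bar>u x - c0\<bar>)"
proof -
  have "- 1 \<le> - t / gap"
    using t lam_le_gap gap_pos by (simp add: divide_le_eq_1)
  then have "1 / 2 \<le> 2 powr (- t / gap)"
    using powr_mono[of "-1" "- t / gap" 2] by (simp add: powr_minus_divide)
  have "1 / t \<le> 1 / B"
    using B_pos t by (intro divide_left_mono) auto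
  also have "\<dots> \<le> 2 / B * 2 powr (- t / gap)"
    using B_pos \<open>1 / 2 \<le> 2 powr (- t / gap)\<close> divide_right_mono[of "1/2" "2 powr (- t / gap)" B]
    by simp
  finally have bound: "1 / t \<le> 2 / B * 2 powr (- t / gap)" .
  have t_pos: "0 < t" using B_pos t by linarith
  have "ennreal t * H (level_set 0 (\<lambda>_. 0) c0 t) \<le> choq H (cell 0 (\<lambda>_. 0)) (\<lambda>x. \<bar>u x - c0\<bar>)"
    by (rule choq_markov[OF H_mono t_pos])
  then have "H (level_set 0 (\<lambda>_. 0) c0 t) \<le> ennreal (1 / t) * choq H (cell 0 (\<lambda>_. 0)) (\<lambda>x. \<bar>u x - c0\<bar>)"
    by (rule ennreal_le_divide_of_mult_le[OF t_pos])
  also have "\<dots> \<le> ennreal (2 / B * 2 powr (- t / gap)) * choq H (cell 0 (\<lambda>_. 0)) (\<lambda>x. \<bar>u x - c0\<bar>)"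
    using bound by (intro mult_right_mono ennreal_leI) simp_all
  finally show ?thesis .
qed

lemma level_set_large_levels:
  assumes mean: "choq H (cell 0 (\<lambda>_. 0)) (\<lambda>x. \<bar>u x - c0\<bar>) \<le> ennreal (B * cell_content 0)"
    and t: "lam \<le> t"
  shows "H (level_set 0 (\<lambda>_. 0) c0 t)
           \<le> ennreal (2 / B * 2 powr (- t / gap)) * choq H (cell 0 (\<lambda>_. 0)) (\<lambda>x. \<bar>u x - c0\<bar>)"
    (is "_ \<le> ennreal ?bound * ?I")
proof -
  define n where "n = nat \<lfloor>(t - gap) / gap\<rfloor>"
  have "ennreal lam * H (level_set 0 (\<lambda>_. 0) c0 t) \<le> ennreal (2 * (1/2) ^ n) * ?I"
  proof (rule level_set_decay_step[OF order_refl _ mean _ t])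
    fix k m assume "0 \<le> k" "cell k m \<subseteq> cell 0 (\<lambda>_. 0)"
    then show "H (level_set k m (center k m) (t - gap)) \<le> ennreal ((1/2) ^ n * cell_content k)"
      unfolding n_def by (rule level_set_geometric_decay)
  qed auto
  then have "H (level_set 0 (\<lambda>_. 0) c0 t) \<le> ennreal (1 / lam) * (ennreal (2 * (1/2) ^ n) * ?I)"
    by (rule ennreal_le_divide_of_mult_le[OF lam_pos])
  also have "\<dots> = ennreal ((1/2) ^ n / (2 * B)) * ?I"
    using B_pos by (simp add: lam_def mult.assoc[symmetric] ennreal_mult[symmetric])
  also have "\<dots> \<le> ennreal ?bound * ?I"
  proof (intro mult_right_mono ennreal_leI)
    have "(1/2 :: real) ^ n \<le> 2 * 2 powr (- ((t - gap) / gap))"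
      unfolding n_def by (rule half_power_nat_floor_le)
    also have "\<dots> = 2 * 2 powr (1 - t / gap)"
      using gap_pos by (simp add: diff_divide_distrib)
    also have "\<dots> = 4 * 2 powr (- t / gap)"
      by (simp add: powr_diff powr_minus divide_inverse)
    finally show "(1/2) ^ n / (2 * B) \<le> ?bound"
      using B_pos by (simp add: field_simps)
  qed simp
  finally show ?thesis .
qed

theorem level_set_exponential_decay:
  assumes "choq H (cell 0 (\<lambda>_. 0)) (\<lambda>x. \<bar>u x - c0\<bar>) \<le> ennreal (B * cell_content 0)" and "B \<le> t"
  shows "H (level_set 0 (\<lambda>_. 0) c0 t)
           \<le> ennreal (2 / B * 2 powr (- t / gap)) * choq H (cell 0 (\<lambda>_. 0)) (\<lambda>x. \<bar>u x - c0\<bar>)"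
  using level_set_small_levels[OF assms] level_set_large_levels[OF assms(1)] by fastforce

end

section \<open>Dyadic BMO\<close>

lemma INF_le_bmo_star:
  assumes "subcube a0 l0 a l"
  shows "(INF c. ennreal (l powr (-\<beta>)) * choq (hdy \<beta> a l) (cube a l) (\<lambda>x. \<bar>u x - c\<bar>))
           \<le> bmo_star \<beta> a0 l0 u"
  unfolding bmo_star_def using assms by (intro SUP_upper2[where i="(a, l)"]) auto

lemma minimizer_le_bmo_star:
  assumes "subcube a0 l0 a l"
    and "\<forall>c'. ennreal (l powr (-\<beta>)) * choq (hdy \<beta> a l) (cube a l) (\<lambda>x. \<bar>u x - cQ\<bar>)
             \<le> ennreal (l powr (-\<beta>)) * choq (hdy \<beta> a l) (cube a l) (\<lambda>x. \<bar>u x - c'\<bar>)"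
  shows "ennreal (l powr (-\<beta>)) * choq (hdy \<beta> a l) (cube a l) (\<lambda>x. \<bar>u x - cQ\<bar>) \<le> bmo_star \<beta> a0 l0 u"
  using assms(2) by (intro order_trans[OF INF_greatest INF_le_bmo_star[OF assms(1)]]) auto

lemma bmo_star_eq_ennreal:
  assumes "0 < \<beta>" "0 < bmo_star \<beta> a0 l0 u"
    and t: "ennreal (1 + 2 powr \<beta>) * bmo_star \<beta> a0 l0 u \<le> ennreal t"
  obtains b where "bmo_star \<beta> a0 l0 u = ennreal b" "0 < b" "2 * b \<le> t"
proof -
  have "bmo_star \<beta> a0 l0 u \<noteq> top"
    using t by (auto simp: ennreal_mult_top add_pos_nonneg top_unique)
  then obtain b where b: "bmo_star \<beta> a0 l0 u = ennreal b" "0 < b"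
    using assms(2) by (cases "bmo_star \<beta> a0 l0 u") auto
  have "ennreal ((1 + 2 powr \<beta>) * b) \<le> ennreal t"
    using t b by (simp add: ennreal_mult add_nonneg_nonneg)
  moreover have "0 < (1 + 2 powr \<beta>) * b"
    using b(2) by (simp add: add_pos_nonneg)
  ultimately have "(1 + 2 powr \<beta>) * b \<le> t"
    by (simp add: ennreal_le_iff2)
  moreover have "2 * b \<le> (1 + 2 powr \<beta>) * b"
    using b(2) assms(1) ge_one_powr_ge_zero[of 2 \<beta>] by (intro mult_right_mono) auto
  ultimately have "2 * b \<le> t" by linarith
  then show ?thesis using that b by blast
qed

context dyadic_grid
begin

lemma choq_le_of_normalized_le:
  assumes "ennreal (side k powr (-\<beta>)) * X \<le> ennreal b" "0 \<le> b"
  shows "X \<le> ennreal (b * cell_content k)"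
proof -
  have "X \<le> ennreal (1 / side k powr (-\<beta>)) * ennreal b"
    using side_pos[of k] by (intro ennreal_le_divide_of_mult_le assms(1)) simp
  also have "\<dots> = ennreal (b * cell_content k)"
    using side_pos[of k] assms(2)
    by (simp add: cell_content_def powr_minus divide_inverse ennreal_mult[symmetric])
  finally show ?thesis .
qed

lemma bmo_star_centers:
  assumes sub: "cube a l \<subseteq> cube a0 l0" and b: "bmo_star \<beta> a0 l0 u = ennreal b" "0 < b"
  obtains center where "\<And>k m. cell k m \<subseteq> cell 0 (\<lambda>_. 0) \<Longrightarrow>
      choq H (cell k m) (\<lambda>x. \<bar>u x - center k m\<bar>) \<le> ennreal (2 * b * cell_content k)"
proof -
  have "\<exists>c. choq H (cell k m) (\<lambda>x. \<bar>u x - c\<bar>) \<le> ennreal (2 * b * cell_content k)"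
    if "cell k m \<subseteq> cell 0 (\<lambda>_. 0)" for k m
  proof -
    let ?local = "\<lambda>c. choq (hdy \<beta> (corner k m) (side k)) (cell k m) (\<lambda>x. \<bar>u x - c\<bar>)"
    have "subcube a0 l0 (corner k m) (side k)"
      using that sub side_pos[of k] by (auto simp: subcube_def cell_def cube_eq_cell)
    from INF_le_bmo_star[OF this, of \<beta> u]
    have "(INF c. ennreal (side k powr (-\<beta>)) * ?local c) \<le> ennreal b"
      unfolding b(1) cell_def .
    also have "\<dots> < ennreal (2 * b)"
      using b(2) by (simp add: ennreal_lessI)
    finally obtain c where "ennreal (side k powr (-\<beta>)) * ?local c \<le> ennreal (2 * b)"
      by (auto simp: INF_less_iff dest: less_imp_le)
    then have "?local c \<le> ennreal (2 * b * cell_content k)"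
      using b(2) by (intro choq_le_of_normalized_le) auto
    moreover have "choq H (cell k m) (\<lambda>x. \<bar>u x - c\<bar>) \<le> ?local c"
      by (intro choq_mono H_le_hdy_cell) auto
    ultimately show ?thesis by (meson order_trans)
  qed
  then show ?thesis using that by metis
qed

lemma level_set_le_bmo_star:
  assumes sub: "subcube a0 l0 a l"
    and b: "bmo_star \<beta> a0 l0 u = ennreal b" "0 < b" "2 * b \<le> t"
    and minimizer: "\<forall>c'. ennreal (l powr (-\<beta>)) * choq H (cube a l) (\<lambda>x. \<bar>u x - cQ\<bar>)
             \<le> ennreal (l powr (-\<beta>)) * choq H (cube a l) (\<lambda>x. \<bar>u x - c'\<bar>)"
  shows "H {x \<in> cube a l. t < \<bar>u x - cQ\<bar>}
           \<le> ennreal (1 / b * exp (- (ln 2 / (32 + 24 * 2 powr \<beta>)) * t / b)) * choq H (cube a l) (\<lambda>x. \<bar>u x - cQ\<bar>)"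
proof -
  obtain center where "\<And>k m. cell k m \<subseteq> cell 0 (\<lambda>_. 0) \<Longrightarrow>
      choq H (cell k m) (\<lambda>x. \<bar>u x - center k m\<bar>) \<le> ennreal (2 * b * cell_content k)"
    using bmo_star_centers sub b(1,2) unfolding subcube_def by blast
  then interpret dyadic_bmo \<beta> a l u "2 * b" center
    using b(2) by unfold_locales auto
  have "ennreal (side 0 powr (-\<beta>)) * choq H (cell 0 (\<lambda>_. 0)) (\<lambda>x. \<bar>u x - cQ\<bar>) \<le> ennreal b"
    using minimizer_le_bmo_star[OF sub minimizer] b(1) by (simp add: side_def cube_eq_cell)
  then have "choq H (cell 0 (\<lambda>_. 0)) (\<lambda>x. \<bar>u x - cQ\<bar>) \<le> ennreal (b * cell_content 0)"
    using b(2) by (intro choq_le_of_normalized_le) auto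
  also have "\<dots> \<le> ennreal (2 * b * cell_content 0)"
    using b(2) cell_content_pos[of 0] by (intro ennreal_leI) auto
  finally have "H (level_set 0 (\<lambda>_. 0) cQ t)
      \<le> ennreal (2 / (2 * b) * 2 powr (- t / gap)) * choq H (cell 0 (\<lambda>_. 0)) (\<lambda>x. \<bar>u x - cQ\<bar>)"
    by (rule level_set_exponential_decay[OF _ b(3)])
  moreover have "gap = (32 + 24 * 2 powr \<beta>) * b"
    unfolding gap_def lam_def mu_def by (simp add: algebra_simps)
  then have "2 / (2 * b) * 2 powr (- t / gap) = 1 / b * exp (- (ln 2 / (32 + 24 * 2 powr \<beta>)) * t / b)"
    using b(2) by (simp add: powr_def)
  ultimately show ?thesis
    unfolding cube_eq_cell by (simp only:)
qed

end

theorem lemma4p2: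
  fixes \<beta> :: real and a0 :: "real^'d" and l0 :: real
  assumes "0 < \<beta>" and "\<beta> \<le> real CARD('d)" and "0 < l0"
  shows "\<exists>c C. 0 < c \<and> 0 < C \<and>
    (\<forall>u a l t cQ.
       u \<in> BMO \<beta> a0 l0 \<longrightarrow> 0 < bmo_star \<beta> a0 l0 u \<longrightarrow>
       subcube a0 l0 a l \<longrightarrow>
       ennreal (1 + 2 powr \<beta>) * bmo_star \<beta> a0 l0 u \<le> ennreal t \<longrightarrow>
       (\<forall>c'. ennreal (l powr (-\<beta>)) * choq (hdy \<beta> a l) (cube a l) (\<lambda>x. \<bar>u x - cQ\<bar>)
              \<le> ennreal (l powr (-\<beta>)) * choq (hdy \<beta> a l) (cube a l) (\<lambda>x. \<bar>u x - c'\<bar>)) \<longrightarrow>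
       hdy \<beta> a l {x \<in> cube a l. \<bar>u x - cQ\<bar> > t}
         \<le> ennreal (C / enn2real (bmo_star \<beta> a0 l0 u))
            * choq (hdy \<beta> a l) (cube a l) (\<lambda>x. \<bar>u x - cQ\<bar>)
            * ennreal (exp (- c * t / enn2real (bmo_star \<beta> a0 l0 u))))"
proof -
  define c where "c = ln 2 / (32 + 24 * 2 powr \<beta>)"
  have "hdy \<beta> a l {x \<in> cube a l. \<bar>u x - cQ\<bar> > t}
          \<le> ennreal (1 / enn2real (bmo_star \<beta> a0 l0 u)) * choq (hdy \<beta> a l) (cube a l) (\<lambda>x. \<bar>u x - cQ\<bar>)
            * ennreal (exp (- c * t / enn2real (bmo_star \<beta> a0 l0 u)))"
    if pos: "0 < bmo_star \<beta> a0 l0 u" and sub: "subcube a0 l0 a l"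
      and t: "ennreal (1 + 2 powr \<beta>) * bmo_star \<beta> a0 l0 u \<le> ennreal t"
      and minimizer: "\<forall>c'. ennreal (l powr (-\<beta>)) * choq (hdy \<beta> a l) (cube a l) (\<lambda>x. \<bar>u x - cQ\<bar>)
              \<le> ennreal (l powr (-\<beta>)) * choq (hdy \<beta> a l) (cube a l) (\<lambda>x. \<bar>u x - c'\<bar>)"
    for u a l t cQ
  proof -
    obtain b where b: "bmo_star \<beta> a0 l0 u = ennreal b" "0 < b" "2 * b \<le> t"
      using bmo_star_eq_ennreal[OF assms(1) pos t] .
    interpret dyadic_grid \<beta> a l
      using assms sub by unfold_locales (auto simp: subcube_def)
    have "ennreal (1 / b * exp (- c * t / b)) = ennreal (1 / b) * ennreal (exp (- c * t / b))"
      by (rule ennreal_mult) (use b(2) in auto)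
    then show ?thesis
      using level_set_le_bmo_star[OF sub b minimizer] b by (simp add: c_def mult_ac)
  qed
  moreover have "0 < c" by (simp add: c_def add_pos_nonneg)
  ultimately show ?thesis by (intro exI[of _ c] exI[of _ 1]) auto
qed

end
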